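(* Let $\mathcal{X}$ be a finite set, let $H:\mathcal{X}^2\to\mathbb{R}$ be any function and let $r\in\mathcal{P}_+(\mathcal{X})$. Then there exist functions $\kappa:\mathcal{X}\to\mathbb{R}$ and $\delta:\mathcal{X}\to\mathbb{R}$ such that the function \[ w(y|x) = \exp\bigl(H(x,y)+\kappa(y)-\kappa(x)-\delta(y)\bigr),\qquad (x,y)\in\mathcal{X}^2, \] is a Markov kernel on $\mathcal{X}$ whose stationary distribution is $r$, i.e. $\sum_{x\in\mathcal{X}} r(x)w(y|x)=r(y)$ for all $y\in\mathcal{X}$. Moreover, $\delta$ is uniquely determined, and $\kappa$ is unique up to an additive constant.
   Context: $\mathcal{P}_+(\mathcal{X})$ denotes the set of strictly positive probability distributions on the finite set $\mathcal{X}$ (functions $r:\mathcal{X}\to(0,\infty)$ with $\sum_x r(x)=1$). A Markov kernel on $\mathcal{X}$ is a function $w:\mathcal{X}^2\to[0,\infty)$, written $w(y|x)$, with $\sum_{y\in\mathcal{X}}w(y|x)=1$ for every $x\in\mathcal{X}$. A distribution $p$ is a stationary distribution of $w$ if $\sum_x w(y|x)p(x)=p(y)$ for all $y$; a strictly positive Markov kernel has a unique stationary distribution. *)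

theory Defs
  imports "HOL-Analysis.Analysis"
begin

definition pos_distribution :: "('x::finite \<Rightarrow> real) \<Rightarrow> bool" where
  "pos_distribution r \<longleftrightarrow> (\<forall>x. r x > 0) \<and> (\<Sum>x\<in>UNIV. r x) = 1"

text \<open>Markov kernel, written w y x for w(y|x).\<close>
definition markov_kernel :: "('x::finite \<Rightarrow> 'x \<Rightarrow> real) \<Rightarrow> bool" where
  "markov_kernel w \<longleftrightarrow> (\<forall>x y. w y x \<ge> 0) \<and> (\<forall>x. (\<Sum>y\<in>UNIV. w y x) = 1)"

definition stationary_dist :: "('x::finite \<Rightarrow> 'x \<Rightarrow> real) \<Rightarrow> ('x \<Rightarrow> real) \<Rightarrow> bool" where
  "stationary_dist w p \<longleftrightarrow> (\<forall>y. (\<Sum>x\<in>UNIV. w y x * p x) = p y)"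

definition tilt_kernel :: "('x \<Rightarrow> 'x \<Rightarrow> real) \<Rightarrow> ('x \<Rightarrow> real) \<Rightarrow> ('x \<Rightarrow> real) \<Rightarrow> 'x \<Rightarrow> 'x \<Rightarrow> real" where
  "tilt_kernel H \<kappa> \<delta> y x = exp (H x y + \<kappa> y - \<kappa> x - \<delta> y)"

end

theory Submission
  imports Defs
begin

text \<open>Writing \<open>b y = exp (\<kappa> y - \<delta> y)\<close>, the kernel is \<open>exp (H x y) * b y\<close> normalised along rows,
  and \<open>\<kappa> x\<close> is the logarithm of the normaliser. Stationarity of \<open>r\<close> is then a fixed point equation
  for \<open>b\<close> on the probability simplex, solved by Brouwer's theorem. For uniqueness, two such kernels
  differ by a factor \<open>q y * p x\<close>; comparing the row sums at a maximum of \<open>p\<close> with the stationarity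
  equation at a minimum of \<open>q\<close> forces \<open>p x * q y = 1\<close> for all \<open>x\<close>, \<open>y\<close>.\<close>

definition scaled_kernel :: "('x::finite \<Rightarrow> 'x \<Rightarrow> real) \<Rightarrow> ('x \<Rightarrow> real) \<Rightarrow> 'x \<Rightarrow> 'x \<Rightarrow> real" where
  "scaled_kernel E b y x = E x y * b y / (\<Sum>z\<in>UNIV. E x z * b z)"

lemma markov_kernel_scaled_kernel:
  fixes E :: "'x::finite \<Rightarrow> 'x \<Rightarrow> real"
  assumes E: "\<And>x y. E x y > 0" and b: "\<And>y. b y \<ge> 0" "b \<noteq> (\<lambda>_. 0)"
  shows "markov_kernel (scaled_kernel E b)"
  unfolding markov_kernel_def
proof (intro conjI allI)
  fix x y
  show "scaled_kernel E b y x \<ge> 0"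
    unfolding scaled_kernel_def using E b by (simp add: less_imp_le sum_nonneg)
next
  fix x
  obtain z where "b z \<noteq> 0" using b(2) by auto
  then have "E x z * b z > 0" using E b(1) by (simp add: order_le_neq_trans)
  then have "(\<Sum>z\<in>UNIV. E x z * b z) > 0"
    by (intro sum_pos2[of UNIV z]) (use E b(1) in \<open>auto simp: less_imp_le\<close>)
  then show "(\<Sum>y\<in>UNIV. scaled_kernel E b y x) = 1"
    unfolding scaled_kernel_def by (simp add: sum_divide_distrib[symmetric])
qed

lemma markov_kernel_preserves_mass:
  assumes "markov_kernel w"
  shows "(\<Sum>y\<in>UNIV. \<Sum>x\<in>UNIV. w y x * p x) = (\<Sum>x\<in>UNIV. p x)"
proof -
  have "(\<Sum>y\<in>UNIV. \<Sum>x\<in>UNIV. w y x * p x) = (\<Sum>x\<in>UNIV. (\<Sum>y\<in>UNIV. w y x) * p x)"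
    by (subst sum.swap) (simp add: sum_distrib_right)
  then show ?thesis using assms by (simp add: markov_kernel_def)
qed

definition prob_simplex :: "(real^'n) set" where
  "prob_simplex = {v. (\<forall>i. 0 \<le> v$i) \<and> (\<Sum>i\<in>UNIV. v$i) = 1}"

lemma closed_prob_simplex: "closed (prob_simplex :: (real^'n) set)"
  unfolding prob_simplex_def Collect_conj_eq
  by (intro closed_Int closed_Collect_all closed_Collect_le closed_Collect_eq continuous_intros)

lemma compact_prob_simplex: "compact (prob_simplex :: (real^'n) set)"
proof (rule compact_eq_bounded_closed[THEN iffD2, OF conjI[OF _ closed_prob_simplex]])
  show "bounded (prob_simplex :: (real^'n) set)"
  proof (rule bounded_subset[OF bounded_cbox[of 0 1]], rule subsetI)
    fix v :: "real^'n" assume v: "v \<in> prob_simplex"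
    have "v$i \<le> (\<Sum>j\<in>UNIV. v$j)" for i
      by (rule member_le_sum) (use v in \<open>auto simp: prob_simplex_def\<close>)
    then show "v \<in> cbox 0 1" using v by (auto simp: mem_box_cart prob_simplex_def)
  qed
qed

lemma convex_prob_simplex: "convex (prob_simplex :: (real^'n) set)"
  unfolding convex_def prob_simplex_def by (auto simp: sum.distrib sum_distrib_left[symmetric])

lemma uniform_in_prob_simplex: "(\<chi> i. 1 / real CARD('n)) \<in> (prob_simplex :: (real^'n) set)"
  by (simp add: prob_simplex_def)

lemma normalised_map_has_fixpoint:
  fixes T :: "real^'n \<Rightarrow> 'n \<Rightarrow> real"
  assumes cont: "\<And>y. continuous_on prob_simplex (\<lambda>v. T v y)"
    and pos: "\<And>v y. v \<in> prob_simplex \<Longrightarrow> T v y > 0"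
  obtains v where "v \<in> prob_simplex" "\<And>y. v$y = T v y / (\<Sum>z\<in>UNIV. T v z)"
proof -
  define F where "F v = (\<chi> y. T v y / (\<Sum>z\<in>UNIV. T v z))" for v
  have total_pos: "(\<Sum>z\<in>UNIV. T v z) > 0" if "v \<in> prob_simplex" for v
    using pos[OF that] by (intro sum_pos) auto
  have "F v \<in> prob_simplex" if "v \<in> prob_simplex" for v
    using pos[OF that] total_pos[OF that]
    by (auto simp: F_def prob_simplex_def sum_divide_distrib[symmetric] less_imp_le)
  moreover have "continuous_on prob_simplex F"
    unfolding F_def
    by (intro continuous_intros cont) (use total_pos in \<open>auto simp: less_imp_neq[symmetric]\<close>)
  ultimately obtain v where "v \<in> prob_simplex" "F v = v"
    using brouwer[OF compact_prob_simplex convex_prob_simplex] uniform_in_prob_simplex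
    by (metis Pi_I empty_iff)
  then show ?thesis using that by (metis F_def vec_lambda_beta)
qed

lemma stationary_scaling_exists:
  fixes E :: "'x::finite \<Rightarrow> 'x \<Rightarrow> real" and r :: "'x \<Rightarrow> real"
  assumes E: "\<And>x y. E x y > 0" and r: "\<And>x. r x > 0"
  obtains b where "\<And>y. b y > 0" "stationary_dist (scaled_kernel E b) r"
proof -
  define S where "S v x = (\<Sum>z\<in>UNIV. E x z * v$z)" for v :: "real^'x" and x
  define G where "G v y = (\<Sum>x\<in>UNIV. r x * E x y / S v x)" for v y
  have S_pos: "S v x > 0" if v: "v \<in> prob_simplex" for v x
  proof -
    obtain z where "v$z \<noteq> 0"
      using v by (force simp: prob_simplex_def)
    then have "E x z * v$z > 0" using E v by (simp add: prob_simplex_def order_le_neq_trans)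
    then show ?thesis unfolding S_def
      by (intro sum_pos2[of UNIV z]) (use E v in \<open>auto simp: prob_simplex_def less_imp_le\<close>)
  qed
  have G_pos: "G v y > 0" if "v \<in> prob_simplex" for v y
    unfolding G_def using S_pos[OF that] r E by (intro sum_pos) auto
  have "continuous_on prob_simplex (\<lambda>v. G v y)" for y
    unfolding G_def S_def
    by (intro continuous_intros) (use S_pos in \<open>auto simp: S_def less_imp_neq[symmetric]\<close>)
  then have "continuous_on prob_simplex (\<lambda>v. r y / G v y)" for y
    by (intro continuous_intros) (use G_pos in \<open>auto simp: less_imp_neq[symmetric]\<close>)
  moreover have "r y / G v y > 0" if "v \<in> prob_simplex" for v y
    using r G_pos[OF that] by simp
  ultimately obtain v where v: "v \<in> prob_simplex"
    and fix_v: "\<And>y. v$y = r y / G v y / (\<Sum>z\<in>UNIV. r z / G v z)"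
    using normalised_map_has_fixpoint[of "\<lambda>v y. r y / G v y"] by blast
  define L where "L = (\<Sum>z\<in>UNIV. r z / G v z)"
  have L_pos: "L > 0" unfolding L_def using r G_pos[OF v] by (intro sum_pos) auto
  define w where "w = scaled_kernel E (\<lambda>y. v$y)"
  have w_image: "(\<Sum>x\<in>UNIV. w y x * r x) = r y / L" for y
  proof -
    have "(\<Sum>x\<in>UNIV. w y x * r x) = v$y * G v y"
      unfolding w_def scaled_kernel_def G_def S_def
      by (simp add: sum_distrib_left algebra_simps)
    also have "\<dots> = r y / L"
      using fix_v[of y] G_pos[OF v, of y] unfolding L_def by (simp add: field_simps)
    finally show ?thesis .
  qed
  have "markov_kernel w"
    unfolding w_def
    by (rule markov_kernel_scaled_kernel[OF E]) (use v in \<open>auto simp: prob_simplex_def\<close>)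
  \<comment> \<open>Total mass is preserved by a Markov kernel, so the normaliser \<open>L\<close> of the fixed point is 1.\<close>
  from markov_kernel_preserves_mass[OF this, of r]
  have "(\<Sum>y\<in>UNIV. r y) / L = (\<Sum>y\<in>UNIV. r y)"
    by (simp add: w_image sum_divide_distrib)
  moreover have "(\<Sum>y\<in>UNIV. r y) > 0" using r by (intro sum_pos) auto
  ultimately have "L = 1" using L_pos by (simp add: field_simps)
  show ?thesis
  proof
    show "v$y > 0" for y
      using fix_v[of y] r G_pos[OF v] L_pos unfolding L_def by simp
    show "stationary_dist (scaled_kernel E (\<lambda>y. v$y)) r"
      using w_image \<open>L = 1\<close> unfolding stationary_dist_def w_def by simp
  qed
qed

lemma tilt_kernel_eq_scaled_kernel:
  fixes H :: "'x::finite \<Rightarrow> 'x \<Rightarrow> real"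
  assumes b: "\<And>y. b y > 0"
  defines "\<kappa> \<equiv> \<lambda>x. ln (\<Sum>z\<in>UNIV. exp (H x z) * b z)"
  shows "tilt_kernel H \<kappa> (\<lambda>y. \<kappa> y - ln (b y)) = scaled_kernel (\<lambda>x y. exp (H x y)) b"
proof (intro ext)
  fix y x
  have "(\<Sum>z\<in>UNIV. exp (H x z) * b z) > 0" using b by (intro sum_pos) auto
  then show "tilt_kernel H \<kappa> (\<lambda>y. \<kappa> y - ln (b y)) y x = scaled_kernel (\<lambda>x y. exp (H x y)) b y x"
    using b[of y] by (simp add: tilt_kernel_def scaled_kernel_def \<kappa>_def exp_diff exp_add)
qed

lemma tilt_kernel_exists:
  fixes H :: "'x::finite \<Rightarrow> 'x \<Rightarrow> real" and r :: "'x \<Rightarrow> real"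
  assumes r: "\<And>x. r x > 0"
  shows "\<exists>\<kappa> \<delta>. markov_kernel (tilt_kernel H \<kappa> \<delta>) \<and> stationary_dist (tilt_kernel H \<kappa> \<delta>) r"
proof -
  obtain b where b: "\<And>y. b y > 0"
    and stat: "stationary_dist (scaled_kernel (\<lambda>x y. exp (H x y)) b) r"
    using stationary_scaling_exists[of "\<lambda>x y. exp (H x y)" r] r by auto
  moreover have "markov_kernel (scaled_kernel (\<lambda>x y. exp (H x y)) b)"
    by (rule markov_kernel_scaled_kernel) (use b in \<open>auto simp: less_imp_le fun_eq_iff less_imp_neq[symmetric]\<close>)
  ultimately show ?thesis
    unfolding tilt_kernel_eq_scaled_kernel[OF b, symmetric] by blast
qed

lemma positive_weighted_sum_eq_lower_bound:
  fixes w f :: "'a \<Rightarrow> real"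
  assumes "finite A" and w: "\<And>y. y \<in> A \<Longrightarrow> w y > 0" and lb: "\<And>y. y \<in> A \<Longrightarrow> m \<le> f y"
    and eq: "(\<Sum>y\<in>A. w y * f y) = (\<Sum>y\<in>A. w y * m)" and "y \<in> A"
  shows "f y = m"
proof -
  have nonneg: "0 \<le> w y * (f y - m)" if "y \<in> A" for y
    using w[OF that] lb[OF that] by simp
  have "(\<Sum>y\<in>A. w y * (f y - m)) = 0"
    using eq by (simp add: right_diff_distrib sum_subtractf)
  then have "w y * (f y - m) = 0"
    using \<open>y \<in> A\<close> by (simp only: sum_nonneg_eq_0_iff[OF \<open>finite A\<close> nonneg])
  then show ?thesis using w[OF \<open>y \<in> A\<close>] by simp
qed

lemma stationary_rescaling_trivial:
  fixes w :: "'x::finite \<Rightarrow> 'x \<Rightarrow> real"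
  assumes w_pos: "\<And>x y. w y x > 0" and r_pos: "\<And>x. r x > 0"
    and p_pos: "\<And>x. p x > 0" and q_pos: "\<And>y. q y > 0"
    and "markov_kernel w" "stationary_dist w r"
    and "markov_kernel (\<lambda>y x. q y * w y x * p x)" "stationary_dist (\<lambda>y x. q y * w y x * p x) r"
  shows "p x * q y = 1"
proof -
  have w_row: "(\<Sum>y\<in>UNIV. w y x * c) = c" for x c
    using assms(5) by (simp add: markov_kernel_def flip: sum_distrib_right)
  have w_col: "(\<Sum>x\<in>UNIV. w y x * r x) = r y" for y
    using assms(6) by (simp add: stationary_dist_def)
  have row: "p x * (\<Sum>y\<in>UNIV. w y x * q y) = 1" for x
    using assms(7) by (simp add: markov_kernel_def sum_distrib_left mult_ac)
  have col: "q y * (\<Sum>x\<in>UNIV. w y x * r x * p x) = r y" for y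
    using assms(8) by (simp add: stationary_dist_def sum_distrib_left mult_ac)
  obtain y0 where y0: "\<And>y. q y0 \<le> q y"
    using ex_min_if_finite[of "range q"] by (auto simp: not_less)
  obtain x0 where x0: "\<And>x. p x \<le> p x0"
    using ex_min_if_finite[of "uminus ` range p"] by (auto simp: not_less)
  have "p x0 * q y0 \<le> 1"
  proof -
    have "(\<Sum>y\<in>UNIV. w y x0 * q y0) \<le> (\<Sum>y\<in>UNIV. w y x0 * q y)"
      by (rule sum_mono) (use w_pos y0 in \<open>simp add: less_imp_le\<close>)
    then have "p x0 * q y0 \<le> p x0 * (\<Sum>y\<in>UNIV. w y x0 * q y)"
      unfolding w_row by (rule mult_left_mono) (use p_pos in \<open>simp add: less_imp_le\<close>)
    then show ?thesis by (simp only: row)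
  qed
  moreover have "r y0 \<le> r y0 * (p x0 * q y0)"
  proof -
    have "(\<Sum>x\<in>UNIV. w y0 x * r x * p x) \<le> (\<Sum>x\<in>UNIV. w y0 x * r x * p x0)"
      by (rule sum_mono) (use w_pos r_pos x0 in \<open>simp add: less_imp_le\<close>)
    also have "\<dots> = r y0 * p x0"
      by (simp only: w_col flip: sum_distrib_right)
    finally have "q y0 * (\<Sum>x\<in>UNIV. w y0 x * r x * p x) \<le> q y0 * (r y0 * p x0)"
      by (rule mult_left_mono) (use q_pos in \<open>simp add: less_imp_le\<close>)
    then show ?thesis by (simp only: col) (simp add: mult_ac)
  qed
  ultimately have "p x0 * q y0 = 1"
    using r_pos[of y0] by simp
  then have "p x0 * (\<Sum>y\<in>UNIV. w y x0 * q y) = p x0 * q y0"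
    by (simp only: row)
  then have "(\<Sum>y\<in>UNIV. w y x0 * q y) = (\<Sum>y\<in>UNIV. w y x0 * q y0)"
    using p_pos[of x0] by (simp add: w_row)
  then have q_const: "q y = q y0" for y
    by (rule positive_weighted_sum_eq_lower_bound[rotated 3]) (use w_pos y0 in auto)
  have "(\<Sum>y\<in>UNIV. w y x * q y) = (\<Sum>y\<in>UNIV. w y x * q y0)"
    by (rule sum.cong[OF refl], rule arg_cong[OF q_const])
  then have "p x * q y0 = 1"
    using row[of x] by (simp only: w_row)
  then show ?thesis by (simp only: q_const[of y])
qed

lemma tilt_kernel_unique:
  fixes H :: "'x::finite \<Rightarrow> 'x \<Rightarrow> real" and r :: "'x \<Rightarrow> real"
  assumes r: "\<And>x. r x > 0"
    and "markov_kernel (tilt_kernel H \<kappa> \<delta>)" "stationary_dist (tilt_kernel H \<kappa> \<delta>) r"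
    and "markov_kernel (tilt_kernel H \<kappa>' \<delta>')" "stationary_dist (tilt_kernel H \<kappa>' \<delta>') r"
  shows "\<delta>' = \<delta> \<and> (\<exists>c. \<forall>x. \<kappa>' x = \<kappa> x + c)"
proof -
  define q where "q y = exp (\<kappa>' y - \<kappa> y - (\<delta>' y - \<delta> y))" for y
  define p where "p x = exp (\<kappa> x - \<kappa>' x)" for x
  have "tilt_kernel H \<kappa>' \<delta>' = (\<lambda>y x. q y * tilt_kernel H \<kappa> \<delta> y x * p x)"
    by (intro ext) (simp add: tilt_kernel_def p_def q_def mult_exp_exp algebra_simps)
  then have "p x * q y = 1" for x y
    using stationary_rescaling_trivial[of "tilt_kernel H \<kappa> \<delta>" r p q] assms
    by (simp add: tilt_kernel_def p_def q_def)
  then have shift: "\<kappa> x - \<kappa>' x + (\<kappa>' y - \<kappa> y - (\<delta>' y - \<delta> y)) = 0" for x y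
    by (metis p_def q_def exp_add exp_eq_one_iff)
  have "\<delta>' y = \<delta> y" for y using shift[of y y] by simp
  moreover have "\<kappa>' x = \<kappa> x + (\<kappa>' x0 - \<kappa> x0)" for x x0
    using shift[of x x0] shift[of x0 x0] by simp
  ultimately show ?thesis by blast
qed

theorem theorem1:
  fixes H :: "'x::finite \<Rightarrow> 'x \<Rightarrow> real" and r :: "'x \<Rightarrow> real"
  assumes "pos_distribution r"
  shows "\<exists>\<kappa> \<delta>. markov_kernel (tilt_kernel H \<kappa> \<delta>) \<and> stationary_dist (tilt_kernel H \<kappa> \<delta>) r
           \<and> (\<forall>\<kappa>' \<delta>'. markov_kernel (tilt_kernel H \<kappa>' \<delta>') \<and> stationary_dist (tilt_kernel H \<kappa>' \<delta>') r
                 \<longrightarrow> \<delta>' = \<delta> \<and> (\<exists>c. \<forall>x. \<kappa>' x = \<kappa> x + c))"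
proof -
  have r: "r x > 0" for x using assms by (simp add: pos_distribution_def)
  then obtain \<kappa> \<delta> where "markov_kernel (tilt_kernel H \<kappa> \<delta>)" "stationary_dist (tilt_kernel H \<kappa> \<delta>) r"
    using tilt_kernel_exists by blast
  then show ?thesis using tilt_kernel_unique[where r = r, OF r] by blast
qed

end
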